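(* Let $(c(t))_{t\in\mathbb{R}}$ be a bounded complex-valued cosine function (i.e. $c:\mathbb{R}\to\mathbb{C}$ bounded with $c(0)=1$ and $c(s+t)+c(s-t)=2c(s)c(t)$ for all $s,t\in\mathbb{R}$) which is discontinuous. Then for every $\alpha\in[-1,1]$ there exists a sequence $(t_n)_{n\ge1}$ of positive real numbers such that $\lim_{n\to\infty}t_n=0$ and $\lim_{n\to\infty}c(t_n)=\alpha$. *)

theory Defs
  imports "HOL-Analysis.Analysis"
begin

definition cosine_function :: "(real \<Rightarrow> complex) \<Rightarrow> bool" where
  "cosine_function c \<longleftrightarrow> c 0 = 1 \<and> (\<forall>s t. c (s + t) + c (s - t) = 2 * c s * c t)"

end

theory Submission
  imports Defs
begin

text \<open>
  A cosine function is \<open>c = (\<chi> + \<chi> \<circ> uminus) / 2\<close> for a character \<open>\<chi> = c + \<i> s\<close> of \<open>(\<real>, +)\<close>,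
  where \<open>s\<close> is a sine function built from translates of \<open>c\<close>; boundedness of \<open>c\<close> forces
  \<open>|\<chi>| = 1\<close>, so \<open>c = Re \<chi>\<close>. The cluster values of \<open>\<chi>\<close> at \<open>0\<close> form a closed subgroup of the unit
  circle, which is divisible because \<open>\<chi> (t / n) ^ n = \<chi> t\<close> and the circle is compact. If \<open>c\<close> is
  discontinuous, so is \<open>\<chi>\<close> at \<open>0\<close>, and the subgroup is nontrivial; a nontrivial closed divisible
  subgroup of the circle cannot be finite cyclic, hence is dense, hence is the whole circle. So
  \<open>cis (arccos \<alpha>)\<close> is a cluster value, and as \<open>Re \<chi>\<close> is even the approximating arguments can be
  taken positive.
\<close>

section \<open>Cluster values of a function at a point\<close>

lemma LIMSEQ_dist_less_inverse_Suc:
  fixes s :: "nat \<Rightarrow> 'a::metric_space"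
  assumes "\<And>n. dist (s n) x < inverse (Suc n)"
  shows "s \<longlonglongrightarrow> x"
proof -
  have "(\<lambda>n. dist (s n) x) \<longlonglongrightarrow> 0"
    by (rule tendsto_sandwich[OF _ _ tendsto_const LIMSEQ_inverse_real_of_nat])
      (use assms in \<open>auto intro!: always_eventually less_imp_le\<close>)
  then show ?thesis
    by (rule tendsto_dist_iff[THEN iffD2])
qed

definition cluster_values :: "('a::metric_space \<Rightarrow> 'b::metric_space) \<Rightarrow> 'a \<Rightarrow> 'b set" where
  "cluster_values f x = (\<Inter>d\<in>{0<..}. closure (f ` ball x d))"

lemma closed_cluster_values: "closed (cluster_values f x)"
  unfolding cluster_values_def by (simp add: closed_INT)

lemma cluster_values_iff:
  "w \<in> cluster_values f x \<longleftrightarrow> (\<forall>d>0. \<forall>e>0. \<exists>t. dist t x < d \<and> dist (f t) w < e)"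
proof -
  have "w \<in> closure (f ` ball x d) \<longleftrightarrow> (\<forall>e>0. \<exists>t. dist t x < d \<and> dist (f t) w < e)" for d
    unfolding closure_approachable ball_def by (auto simp: dist_commute)
  then show ?thesis
    by (simp only: cluster_values_def INT_iff Ball_def greaterThan_iff)
qed

lemma cluster_values_LIMSEQ:
  assumes "s \<longlonglongrightarrow> x" and "(\<lambda>n. f (s n)) \<longlonglongrightarrow> w"
  shows "w \<in> cluster_values f x"
  unfolding cluster_values_iff
proof (intro allI impI)
  fix d e :: real assume "d > 0" "e > 0"
  have "\<forall>\<^sub>F n in sequentially. dist (s n) x < d \<and> dist (f (s n)) w < e"
    using tendstoD[OF assms(1) \<open>d > 0\<close>] tendstoD[OF assms(2) \<open>e > 0\<close>] by (rule eventually_conj)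
  then obtain N where "\<forall>n\<ge>N. dist (s n) x < d \<and> dist (f (s n)) w < e"
    unfolding eventually_sequentially by blast
  then show "\<exists>t. dist t x < d \<and> dist (f t) w < e"
    by blast
qed

lemma cluster_values_obtains_LIMSEQ:
  assumes "w \<in> cluster_values f x"
  obtains s where "s \<longlonglongrightarrow> x" and "(\<lambda>n. f (s n)) \<longlonglongrightarrow> w"
proof -
  have "\<forall>n. \<exists>t. dist t x < inverse (Suc n) \<and> dist (f t) w < inverse (Suc n)"
    using assms inverse_Suc unfolding cluster_values_iff by blast
  then obtain s where "\<forall>n. dist (s n) x < inverse (Suc n) \<and> dist (f (s n)) w < inverse (Suc n)"
    by (rule choice[THEN exE])
  then have "s \<longlonglongrightarrow> x" and "(\<lambda>n. f (s n)) \<longlonglongrightarrow> w"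
    by (simp_all add: LIMSEQ_dist_less_inverse_Suc)
  then show ?thesis
    by (rule that)
qed

lemma isCont_if_cluster_values_subset:
  fixes f :: "'a::metric_space \<Rightarrow> 'b::heine_borel"
  assumes "bounded (range f)" and "cluster_values f x \<subseteq> {f x}"
  shows "isCont f x"
proof (rule ccontr)
  assume "\<not> isCont f x"
  then obtain e where "e > 0" and "\<forall>d>0. \<exists>t. dist t x < d \<and> e \<le> dist (f t) (f x)"
    unfolding continuous_at_eps_delta by (auto simp: not_less) (meson linorder_not_le)
  then have "\<forall>n. \<exists>t. dist t x < inverse (Suc n) \<and> e \<le> dist (f t) (f x)"
    by simp
  then obtain s where s: "\<forall>n. dist (s n) x < inverse (Suc n) \<and> e \<le> dist (f (s n)) (f x)"
    by (rule choice[THEN exE])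
  have "bounded (range (\<lambda>n. f (s n)))"
    using assms(1) by (rule bounded_subset) auto
  from bounded_imp_convergent_subsequence[OF this]
  obtain l r where r: "strict_mono r" and lim: "(\<lambda>n. f (s (r n))) \<longlonglongrightarrow> l"
    unfolding o_def by blast
  have "s \<longlonglongrightarrow> x"
    using s LIMSEQ_dist_less_inverse_Suc by blast
  then have "(\<lambda>n. s (r n)) \<longlonglongrightarrow> x"
    using LIMSEQ_subseq_LIMSEQ[OF _ r] by (simp add: o_def)
  then have "l = f x"
    using cluster_values_LIMSEQ[where f=f, OF _ lim] assms(2) by blast
  moreover have "e \<le> dist l (f x)"
    using s by (intro LIMSEQ_le_const[OF tendsto_dist[OF lim tendsto_const]]) blast
  ultimately show False
    using \<open>e > 0\<close> by simp
qed

section \<open>Closed divisible subgroups of the unit circle\<close>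

lemma isCont_cis: "isCont cis x"
  unfolding cis_conv_exp by (intro continuous_intros)

locale circle_subgroup =
  fixes G :: "complex set"
  assumes one_mem: "1 \<in> G"
    and mult_mem: "a \<in> G \<Longrightarrow> b \<in> G \<Longrightarrow> a * b \<in> G"
    and cnj_mem: "a \<in> G \<Longrightarrow> cnj a \<in> G"
    and norm_mem: "a \<in> G \<Longrightarrow> norm a = 1"
begin

lemma power_mem: "a \<in> G \<Longrightarrow> a ^ n \<in> G"
  by (induction n) (simp_all add: one_mem mult_mem)

lemma cis_Arg_mem: "cis (Arg a) = a" if "a \<in> G"
proof -
  have "a \<noteq> 0"
    using norm_mem[OF that] by auto
  then show ?thesis
    using norm_mem[OF that] by (simp add: cis_Arg sgn_div_norm)
qed

lemma cis_diff_mem: "cis (g - h) \<in> G" if "cis g \<in> G" and "cis h \<in> G"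
proof -
  have "cis (g - h) = cis g * cnj (cis h)"
    by (simp add: cis_cnj cis_mult)
  then show ?thesis
    using that mult_mem cnj_mem by simp
qed

lemma cis_of_int_mult_mem:
  assumes "cis g \<in> G"
  shows "cis (of_int k * g) \<in> G"
proof (cases "k \<ge> 0")
  case True
  then have "cis g ^ nat k = cis (of_int k * g)"
    using Complex.DeMoivre[of g "nat k"] by simp
  then show ?thesis
    using power_mem[OF assms, of "nat k"] by simp
next
  case False
  then have "cnj (cis g ^ nat (- k)) = cis (of_int k * g)"
    using Complex.DeMoivre[of g "nat (- k)"] by (simp add: cis_cnj)
  then show ?thesis
    using cnj_mem[OF power_mem[OF assms, of "nat (- k)"]] by simp
qed

lemma cis_mem_if_small_angles:
  assumes "closed G" and small: "\<And>h. h > 0 \<Longrightarrow> \<exists>g. 0 < g \<and> g < h \<and> cis g \<in> G"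
  shows "cis p \<in> G"
proof (rule closed_approachable[OF assms(1), THEN iffD1], intro allI impI)
  fix e :: real assume "e > 0"
  with isCont_cis obtain h where "h > 0" and h: "\<And>x. dist x p < h \<Longrightarrow> dist (cis x) (cis p) < e"
    unfolding continuous_at_eps_delta by blast
  obtain g where g: "0 < g" "g < h" "cis g \<in> G"
    using small[OF \<open>h > 0\<close>] by blast
  define k where "k = \<lfloor>p / g\<rfloor>"
  have "of_int k \<le> p / g" "p / g < of_int k + 1"
    unfolding k_def by linarith+
  then have "of_int k * g \<le> p" "p < of_int k * g + g"
    using g(1) by (simp_all add: field_simps)
  then have "dist (cis (of_int k * g)) (cis p) < e"
    using g(2) by (intro h) (simp add: dist_real_def)
  then show "\<exists>y\<in>G. dist y (cis p) < e"
    using cis_of_int_mult_mem[OF g(3)] by blast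
qed

lemma angles_are_multiples_of_least:
  assumes "closed G" and "h > 0" and no_small: "\<And>g. 0 < g \<Longrightarrow> g < h \<Longrightarrow> cis g \<notin> G"
  obtains a where "a > 0" and "cis a \<in> G" and "\<And>g. cis g \<in> G \<Longrightarrow> \<exists>k::int. g = of_int k * a"
proof -
  define P where "P = {g. 0 < g \<and> cis g \<in> G}"
  define a where "a = Inf P"
  have "2 * pi \<in> P"
    unfolding P_def by (simp add: one_mem)
  moreover have bdd: "bdd_below P"
    unfolding P_def by (rule bdd_belowI[of _ 0]) auto
  ultimately have "a \<in> closure P"
    unfolding a_def by (intro closure_contains_Inf) auto
  moreover have "P \<subseteq> {h..} \<inter> cis -` G"
    using no_small by (force simp: P_def)
  moreover have "closed ({h..} \<inter> cis -` G)"
    by (intro closed_Int closed_atLeast continuous_closed_vimage assms(1) isCont_cis)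
  ultimately have "a \<in> {h..} \<inter> cis -` G"
    using closure_minimal by blast
  then have "a > 0" and a: "cis a \<in> G"
    using \<open>h > 0\<close> by auto
  have least: "a \<le> g" if "0 < g" and "cis g \<in> G" for g
    unfolding a_def using that bdd by (intro cInf_lower) (auto simp: P_def)
  have "\<exists>k::int. g = of_int k * a" if "cis g \<in> G" for g
  proof -
    define k where "k = \<lfloor>g / a\<rfloor>"
    have "of_int k \<le> g / a" "g / a < of_int k + 1"
      unfolding k_def by linarith+
    then have "0 \<le> g - of_int k * a" "g - of_int k * a < a"
      using \<open>a > 0\<close> by (simp_all add: field_simps)
    moreover have "cis (g - of_int k * a) \<in> G"
      using that cis_of_int_mult_mem[OF a] by (rule cis_diff_mem)
    ultimately have "g - of_int k * a = 0"
      using least[of "g - of_int k * a"] by fastforce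
    then show ?thesis
      by auto
  qed
  with \<open>a > 0\<close> a that show ?thesis
    by blast
qed

lemma cis_mem_if_divisible:
  assumes "closed G"
    and divisible: "\<And>a n. a \<in> G \<Longrightarrow> n > 0 \<Longrightarrow> \<exists>v\<in>G. v ^ n = a"
    and "w \<in> G" and "w \<noteq> 1"
  shows "cis p \<in> G"
proof (cases "\<forall>h>0. \<exists>g. 0 < g \<and> g < h \<and> cis g \<in> G")
  case True
  then show ?thesis
    using cis_mem_if_small_angles[OF assms(1)] by blast
next
  case False
  then obtain h where "h > 0" "\<And>g. 0 < g \<Longrightarrow> g < h \<Longrightarrow> cis g \<notin> G"
    by blast
  then obtain a where "a > 0" and a: "cis a \<in> G"
    and multiple: "\<And>g. cis g \<in> G \<Longrightarrow> \<exists>k::int. g = of_int k * a"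
    using angles_are_multiples_of_least[OF assms(1)] by metis
  obtain m :: int where m: "2 * pi = of_int m * a"
    using multiple[of "2 * pi"] one_mem by auto
  then have "0 < of_int m * a"
    using pi_gt_zero by linarith
  then have "m > 0"
    using \<open>a > 0\<close> by (simp add: zero_less_mult_iff)
  then obtain v where v: "v \<in> G" "v ^ nat m = cis a"
    using divisible[OF a, of "nat m"] by auto
  obtain k :: int where k: "Arg v = of_int k * a"
    using multiple[of "Arg v"] cis_Arg_mem[OF v(1)] v(1) by auto
  \<comment> \<open>\<open>G\<close> is cyclic of order \<open>m\<close> with generator \<open>cis a\<close>,
    so an \<open>m\<close>-th root of \<open>cis a\<close> in \<open>G\<close> forces \<open>cis a = 1\<close>.\<close>
  have "cis a = cis (Arg v) ^ nat m"
    using v cis_Arg_mem[OF v(1)] by simp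
  also have "\<dots> = cis (of_int k * (of_int m * a))"
    using \<open>m > 0\<close> by (simp add: Complex.DeMoivre k algebra_simps)
  also have "\<dots> = cis (2 * pi * of_int k)"
    by (metis m mult.commute)
  also have "\<dots> = 1"
    by (rule cis_multiple_2pi) simp
  finally obtain j :: int where j: "a = of_int j * 2 * pi"
    using cos_one_2pi_int[of a] cis.sel(1)[of a] by auto
  obtain l :: int where "Arg w = of_int l * a"
    using multiple[of "Arg w"] cis_Arg_mem[OF assms(3)] assms(3) by auto
  then have "w = cis (2 * pi * of_int (l * j))"
    using cis_Arg_mem[OF assms(3)] j by (simp add: algebra_simps)
  with assms(4) show ?thesis
    by (simp add: cis_multiple_2pi)
qed

end

section \<open>Characters of the real line\<close>

locale character =
  fixes ch :: "real \<Rightarrow> complex"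
  assumes add: "ch (x + y) = ch x * ch y"
    and zero: "ch 0 = 1"
begin

lemma mult_uminus: "ch x * ch (- x) = 1"
  using add[of x "- x"] by (simp add: zero)

lemma of_nat_mult: "ch (real n * x) = ch x ^ n"
proof (induction n)
  case (Suc n)
  have "ch (real (Suc n) * x) = ch (x + real n * x)"
    by (simp add: algebra_simps)
  with Suc show ?case
    by (simp add: add)
qed (simp add: zero)

lemma norm_eq_1_if_bounded:
  assumes bounded: "\<And>x. norm (ch x + ch (- x)) \<le> B"
  shows "norm (ch x) = 1"
proof -
  have norm_mult_uminus: "norm (ch x) * norm (ch (- x)) = 1" for x
    using mult_uminus[of x] by (metis norm_mult norm_one)
  have le_1: "norm (ch x) \<le> 1" for x
  proof (rule ccontr)
    assume "\<not> norm (ch x) \<le> 1"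
    then have gt_1: "norm (ch x) > 1"
      by simp
    then obtain n where n: "B + 1 < norm (ch x) ^ n"
      using real_arch_pow by blast
    have "norm (ch (- x)) \<le> norm (ch (- x)) * norm (ch x)"
      using gt_1 by (simp add: mult_le_cancel_left1)
    then have "norm (ch (- x)) \<le> 1"
      using norm_mult_uminus[of x] by (simp add: mult.commute)
    then have "norm (ch x) ^ n - 1 \<le> norm (ch x ^ n) - norm (ch (- x) ^ n)"
      by (simp add: norm_power power_le_one)
    also have "\<dots> \<le> norm (ch x ^ n + ch (- x) ^ n)"
      by (rule norm_diff_ineq)
    also have "\<dots> = norm (ch (real n * x) + ch (- (real n * x)))"
      using of_nat_mult[of n x] of_nat_mult[of n "- x"] by simp
    finally show False
      using bounded[of "real n * x"] n by linarith
  qed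
  have "norm (ch x) * norm (ch (- x)) \<le> norm (ch x)"
    using le_1[of "- x"] by (intro mult_left_le) simp_all
  then show ?thesis
    using le_1[of x] norm_mult_uminus[of x] by simp
qed

end

locale unitary_character = character +
  assumes norm: "norm (ch x) = 1"
begin

lemma uminus: "ch (- x) = cnj (ch x)"
proof -
  have "ch x * ch (- x) = ch x * cnj (ch x)"
    using mult_uminus[of x] complex_norm_square[of "ch x"] by (simp add: norm)
  moreover have "ch x \<noteq> 0"
    using norm[of x] by auto
  ultimately show ?thesis
    by (metis mult_left_cancel)
qed

lemma Re_abs: "Re (ch \<bar>x\<bar>) = Re (ch x)"
  by (cases "x \<ge> 0") (simp_all add: uminus)

lemma isCont_if_isCont_zero:
  assumes "isCont ch 0"
  shows "isCont ch x"
proof -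
  have "(\<lambda>h. ch x * ch h) \<midarrow>0\<rightarrow> ch x * ch 0"
    using assms by (intro tendsto_intros) (simp add: isCont_def)
  then show ?thesis
    by (simp add: isCont_iff add zero)
qed

lemma cluster_values_one: "1 \<in> cluster_values ch 0"
  using cluster_values_LIMSEQ[of "\<lambda>n. 0" 0 ch 1] by (simp add: zero)

lemma cluster_values_mult:
  assumes "a \<in> cluster_values ch 0" and "b \<in> cluster_values ch 0"
  shows "a * b \<in> cluster_values ch 0"
proof -
  obtain s u where "s \<longlonglongrightarrow> 0" "(\<lambda>n. ch (s n)) \<longlonglongrightarrow> a"
    and "u \<longlonglongrightarrow> 0" "(\<lambda>n. ch (u n)) \<longlonglongrightarrow> b"
    using assms by (metis cluster_values_obtains_LIMSEQ)
  then have "(\<lambda>n. s n + u n) \<longlonglongrightarrow> 0" and "(\<lambda>n. ch (s n + u n)) \<longlonglongrightarrow> a * b"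
    using tendsto_add[of s 0 _ u 0] tendsto_mult by (auto simp: add)
  then show ?thesis
    by (rule cluster_values_LIMSEQ)
qed

lemma cluster_values_cnj:
  assumes "a \<in> cluster_values ch 0"
  shows "cnj a \<in> cluster_values ch 0"
proof -
  obtain s where "s \<longlonglongrightarrow> 0" "(\<lambda>n. ch (s n)) \<longlonglongrightarrow> a"
    using assms by (rule cluster_values_obtains_LIMSEQ)
  then have "(\<lambda>n. - s n) \<longlonglongrightarrow> 0" and "(\<lambda>n. ch (- s n)) \<longlonglongrightarrow> cnj a"
    using tendsto_minus[of s 0] tendsto_cnj by (auto simp: uminus)
  then show ?thesis
    by (rule cluster_values_LIMSEQ)
qed

lemma norm_cluster_values:
  assumes "a \<in> cluster_values ch 0"
  shows "norm a = 1"
proof -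
  obtain s where "(\<lambda>n. ch (s n)) \<longlonglongrightarrow> a"
    using assms by (rule cluster_values_obtains_LIMSEQ)
  then have "(\<lambda>n. 1) \<longlonglongrightarrow> norm a"
    using tendsto_norm by (fastforce simp: norm)
  then show ?thesis
    by (simp add: LIMSEQ_const_iff)
qed

lemma cluster_values_root:
  assumes "a \<in> cluster_values ch 0" and "n > 0"
  shows "\<exists>v\<in>cluster_values ch 0. v ^ n = a"
proof -
  obtain s where s: "s \<longlonglongrightarrow> 0" "(\<lambda>k. ch (s k)) \<longlonglongrightarrow> a"
    using assms(1) by (rule cluster_values_obtains_LIMSEQ)
  have "bounded (range (\<lambda>k. ch (s k / n)))"
    by (rule boundedI[of _ 1]) (auto simp: norm)
  from bounded_imp_convergent_subsequence[OF this]
  obtain v r where r: "strict_mono r" and v: "(\<lambda>k. ch (s (r k) / n)) \<longlonglongrightarrow> v"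
    unfolding o_def by blast
  have "(\<lambda>k. s (r k)) \<longlonglongrightarrow> 0"
    using LIMSEQ_subseq_LIMSEQ[OF s(1) r] by (simp add: o_def)
  then have "(\<lambda>k. s (r k) / n) \<longlonglongrightarrow> 0"
    using tendsto_divide_zero by blast
  then have "v \<in> cluster_values ch 0"
    using v by (rule cluster_values_LIMSEQ)
  moreover have "(\<lambda>k. ch (s (r k))) \<longlonglongrightarrow> v ^ n"
    using tendsto_power[OF v, of n] assms(2) by (simp add: of_nat_mult[symmetric])
  then have "v ^ n = a"
    using LIMSEQ_subseq_LIMSEQ[OF s(2) r] LIMSEQ_unique by (auto simp: o_def)
  ultimately show ?thesis
    by blast
qed

sublocale cluster_values: circle_subgroup "cluster_values ch 0"
  by unfold_locales (simp_all add: cluster_values_one cluster_values_mult cluster_values_cnj norm_cluster_values)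

lemma cis_mem_cluster_values:
  assumes "\<not> isCont ch 0"
  shows "cis p \<in> cluster_values ch 0"
proof -
  have "bounded (range ch)"
    by (rule boundedI[of _ 1]) (auto simp: norm)
  then obtain w where "w \<in> cluster_values ch 0" "w \<noteq> 1"
    using isCont_if_cluster_values_subset[of ch 0] assms by (auto simp: zero)
  then show ?thesis
    using closed_cluster_values cluster_values_root by (intro cluster_values.cis_mem_if_divisible) auto
qed

lemma cluster_values_approx_nonzero:
  assumes "-1 \<in> cluster_values ch 0" and "w \<in> cluster_values ch 0" and "d > 0" and "e > 0"
  shows "\<exists>t. t \<noteq> 0 \<and> \<bar>t\<bar> < d \<and> norm (ch t - w) < e"
proof -
  have "e / 2 > 0" "d / 2 > 0" "min (e / 4) 1 > 0"
    using assms(3,4) by auto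
  obtain t where t: "\<bar>t\<bar> < d" "norm (ch t - w) < e / 2"
    using assms(2,3) \<open>e / 2 > 0\<close> unfolding cluster_values_iff dist_real_def dist_norm diff_0_right by blast
  show ?thesis
  proof (cases "t = 0")
    case False
    have "norm (ch t - w) < e"
      using t(2) norm_ge_zero[of "ch t - w"] by linarith
    with False t(1) show ?thesis
      by blast
  next
    case True
    \<comment> \<open>Then \<open>w \<approx> 1\<close>; use \<open>ch (2 * t') = ch t' ^ 2 \<approx> 1\<close>
      for some \<open>t' \<noteq> 0\<close> with \<open>ch t' \<approx> -1\<close>.\<close>
    obtain t' where t': "\<bar>t'\<bar> < d / 2" "norm (ch t' + 1) < min (e / 4) 1"
      using assms(1) \<open>d / 2 > 0\<close> \<open>min (e / 4) 1 > 0\<close>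
      unfolding cluster_values_iff dist_real_def dist_norm diff_0_right diff_minus_eq_add by blast
    have "t' \<noteq> 0"
      using t'(2) by (auto simp: zero)
    have "ch (2 * t') - 1 = (ch t' + 1) * (ch t' - 1)"
      using add[of t' t'] by (simp add: algebra_simps mult_2)
    then have "norm (ch (2 * t') - 1) = norm (ch t' + 1) * norm (ch t' - 1)"
      by (simp add: norm_mult)
    also have "\<dots> \<le> e / 4 * 2"
      using t'(2) norm_triangle_ineq4[of "ch t'" 1] assms(4) by (intro mult_mono) (auto simp: norm)
    finally have "norm (ch (2 * t') - 1) \<le> e / 2"
      by simp
    moreover have "norm (ch (2 * t') - w) \<le> norm (ch (2 * t') - 1) + norm (1 - w)"
      using norm_triangle_ineq[of "ch (2 * t') - 1" "1 - w"] by simp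
    ultimately have "norm (ch (2 * t') - w) < e"
      using t(2) True by (simp add: zero)
    with \<open>t' \<noteq> 0\<close> t'(1) show ?thesis
      by (intro exI[of _ "2 * t'"]) auto
  qed
qed

lemma Re_approx_from_right:
  assumes "\<not> isCont ch 0" and "-1 \<le> \<alpha>" and "\<alpha> \<le> 1"
  obtains t where "\<And>n. t n > 0" and "t \<longlonglongrightarrow> 0" and "(\<lambda>n. Re (ch (t n))) \<longlonglongrightarrow> \<alpha>"
proof -
  define w where "w = cis (arccos \<alpha>)"
  have "Re w = \<alpha>"
    using assms(2,3) by (simp add: w_def cos_arccos)
  have "\<forall>n. \<exists>t. t \<noteq> 0 \<and> \<bar>t\<bar> < inverse (Suc n) \<and> norm (ch t - w) < inverse (Suc n)"
    using cluster_values_approx_nonzero cis_mem_cluster_values[OF assms(1), of pi]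
      cis_mem_cluster_values[OF assms(1), of "arccos \<alpha>"] w_def by simp
  then obtain s
    where s: "\<forall>n. s n \<noteq> 0 \<and> \<bar>s n\<bar> < inverse (Suc n) \<and> norm (ch (s n) - w) < inverse (Suc n)"
    by (rule choice[THEN exE])
  then have "(\<lambda>n. \<bar>s n\<bar>) \<longlonglongrightarrow> 0" and "(\<lambda>n. ch (s n)) \<longlonglongrightarrow> w"
    by (simp_all add: LIMSEQ_dist_less_inverse_Suc dist_norm)
  then have "(\<lambda>n. Re (ch \<bar>s n\<bar>)) \<longlonglongrightarrow> \<alpha>"
    using tendsto_Re \<open>Re w = \<alpha>\<close> by (fastforce simp: Re_abs)
  with s \<open>(\<lambda>n. \<bar>s n\<bar>) \<longlonglongrightarrow> 0\<close> show ?thesis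
    by (intro that[of "\<lambda>n. \<bar>s n\<bar>"]) auto
qed

end

section \<open>Cosine functions\<close>

context
  fixes c :: "real \<Rightarrow> complex"
  assumes cosine: "cosine_function c"
begin

lemma cosine_function_zero: "c 0 = 1"
  using cosine unfolding cosine_function_def by blast

lemma cosine_function_product: "c a * c b = (c p + c q) / 2" if "p = a + b" and "q = a - b"
  using cosine that unfolding cosine_function_def by simp

lemma cosine_function_uminus: "c (- t) = c t"
proof -
  have "c 0 * c t = (c t + c (- t)) / 2"
    by (rule cosine_function_product) simp_all
  then show ?thesis
    by (simp add: cosine_function_zero field_simps)
qed

lemma cosine_function_double: "c (2 * x) = 2 * c x ^ 2 - 1"
proof -
  have "c x * c x = (c (2 * x) + c 0) / 2"
    by (rule cosine_function_product) simp_all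
  then show ?thesis
    by (simp add: cosine_function_zero power2_eq_square field_simps)
qed

lemma cosine_function_sine_companion:
  assumes "c t0 ^ 2 \<noteq> 1"
  obtains s where "\<And>x y. c (x + y) = c x * c y - s x * s y"
    and "\<And>x y. s (x + y) = s x * c y + c x * s y"
    and "s 0 = 0" and "\<And>x. s (- x) = - s x"
proof -
  define S where "S = csqrt (1 - c t0 ^ 2)"
  have S2: "S ^ 2 = 1 - c t0 ^ 2" and "S \<noteq> 0"
    using assms by (auto simp: S_def)
  \<comment> \<open>The addition theorem of \<open>cos\<close> suggests
    \<open>sin x = (cos (x - t0) - cos (x + t0)) / (2 sin t0)\<close>.\<close>
  define s where "s x = (c (x - t0) - c (x + t0)) / (2 * S)" for x
  have product: "s x * s y = (c (x - y) - c (x + y)) / 2" for x y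
  proof -
    have "c (x - t0) * c (y - t0) = (c (x + y - 2 * t0) + c (x - y)) / 2"
      and "c (x - t0) * c (y + t0) = (c (x + y) + c (x - y - 2 * t0)) / 2"
      and "c (x + t0) * c (y - t0) = (c (x + y) + c (x - y + 2 * t0)) / 2"
      and "c (x + t0) * c (y + t0) = (c (x + y + 2 * t0) + c (x - y)) / 2"
      by (rule cosine_function_product; simp)+
    then have "(c (x - t0) - c (x + t0)) * (c (y - t0) - c (y + t0))
        = (c (x + y - 2 * t0) + c (x + y + 2 * t0) + 2 * c (x - y) - 2 * c (x + y)
            - c (x - y - 2 * t0) - c (x - y + 2 * t0)) / 2"
      by (simp add: algebra_simps add_divide_distrib diff_divide_distrib)
    also have "\<dots> = (c (x + y) - c (x - y)) * (c (2 * t0) - 1)"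
    proof -
      have "c (x + y) * c (2 * t0) = (c (x + y + 2 * t0) + c (x + y - 2 * t0)) / 2"
        and "c (x - y) * c (2 * t0) = (c (x - y + 2 * t0) + c (x - y - 2 * t0)) / 2"
        by (rule cosine_function_product; simp)+
      then show ?thesis
        by (simp add: field_simps)
    qed
    also have "\<dots> = (c (x - y) - c (x + y)) * (2 * S ^ 2)"
      unfolding cosine_function_double S2 by (simp add: algebra_simps)
    finally have A: "(c (x - t0) - c (x + t0)) * (c (y - t0) - c (y + t0))
        = (c (x - y) - c (x + y)) * (2 * S ^ 2)" .
    have "s x * s y = (c (x - t0) - c (x + t0)) * (c (y - t0) - c (y + t0)) / (4 * S ^ 2)"
      by (simp add: s_def power2_eq_square)
    also have "\<dots> = (c (x - y) - c (x + y)) / 2"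
      unfolding A using \<open>S \<noteq> 0\<close> by (simp add: power2_eq_square)
    finally show ?thesis .
  qed
  have "c (x + y) = c x * c y - s x * s y" for x y
  proof -
    have "c x * c y = (c (x + y) + c (x - y)) / 2"
      by (rule cosine_function_product) simp_all
    then show ?thesis
      by (simp add: product field_simps)
  qed
  moreover have "s (x + y) = s x * c y + c x * s y" for x y
  proof -
    have "c (x - t0) * c y = (c (x + y - t0) + c (x - y - t0)) / 2"
      and "c (x + t0) * c y = (c (x + y + t0) + c (x - y + t0)) / 2"
      and "c x * c (y - t0) = (c (x + y - t0) + c (x - y + t0)) / 2"
      and "c x * c (y + t0) = (c (x + y + t0) + c (x - y - t0)) / 2"
      by (rule cosine_function_product; simp)+
    with \<open>S \<noteq> 0\<close> show ?thesis
      by (simp add: s_def field_simps)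
  qed
  moreover have "s 0 = 0"
    using cosine_function_uminus[of t0] by (simp add: s_def)
  moreover have "s (- x) = - s x" for x
  proof -
    have "c (- x - t0) = c (x + t0)" and "c (- x + t0) = c (x - t0)"
      using cosine_function_uminus[of "x + t0"] cosine_function_uminus[of "x - t0"] by simp_all
    then show ?thesis
      by (simp add: s_def minus_divide_left)
  qed
  ultimately show ?thesis
    using that by blast
qed

lemma cosine_function_character:
  obtains ch where "character ch" and "\<And>x. c x = (ch x + ch (- x)) / 2"
proof (cases "\<forall>t. c t ^ 2 = 1")
  case True
  then have "c x = 1" for x
    using cosine_function_double[of "x / 2"] by simp
  then show ?thesis
    using that[of "\<lambda>_. 1"] by (simp add: character_def)
next
  case False
  then obtain t0 where "c t0 ^ 2 \<noteq> 1"
    by blast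
  from cosine_function_sine_companion[OF this]
  obtain s where c_add: "\<And>x y. c (x + y) = c x * c y - s x * s y"
    and s_add: "\<And>x y. s (x + y) = s x * c y + c x * s y"
    and "s 0 = 0" and s_uminus: "\<And>x. s (- x) = - s x"
    by blast
  define ch where "ch x = c x + \<i> * s x" for x
  have "character ch"
  proof
    show "ch (x + y) = ch x * ch y" for x y
      by (simp add: ch_def c_add s_add algebra_simps)
    show "ch 0 = 1"
      by (simp add: ch_def cosine_function_zero \<open>s 0 = 0\<close>)
  qed
  moreover have "c x = (ch x + ch (- x)) / 2" for x
    by (simp add: ch_def cosine_function_uminus s_uminus)
  ultimately show ?thesis
    by (rule that)
qed

lemma bounded_cosine_function_unitary_character:
  assumes "bounded (range c)"
  obtains ch where "unitary_character ch" and "\<And>x. c x = of_real (Re (ch x))"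
proof -
  obtain ch where "character ch" and c_eq: "\<And>x. c x = (ch x + ch (- x)) / 2"
    using cosine_function_character by blast
  interpret character ch
    by fact
  obtain B where "\<And>x. norm (c x) \<le> B"
    using assms by (auto simp: bounded_iff)
  moreover have "ch x + ch (- x) = 2 * c x" for x
    by (simp add: c_eq)
  ultimately have "norm (ch x + ch (- x)) \<le> 2 * B" for x
    by (simp add: norm_mult)
  then interpret unitary_character ch
    by unfold_locales (rule norm_eq_1_if_bounded)
  have "c x = of_real (Re (ch x))" for x
    by (simp add: c_eq uminus complex_add_cnj)
  with unitary_character_axioms show ?thesis
    by (rule that)
qed

end

theorem proposition3p1:
  fixes c :: "real \<Rightarrow> complex" and \<alpha> :: real
  assumes "cosine_function c"
    and "bounded (range c)"
    and "\<not> continuous_on UNIV c"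
    and "-1 \<le> \<alpha>" and "\<alpha> \<le> 1"
  shows "\<exists>t :: nat \<Rightarrow> real. (\<forall>n. t n > 0) \<and> t \<longlonglongrightarrow> 0
           \<and> (\<lambda>n. c (t n)) \<longlonglongrightarrow> complex_of_real \<alpha>"
proof -
  obtain ch where "unitary_character ch" and c_Re: "\<And>x. c x = of_real (Re (ch x))"
    using bounded_cosine_function_unitary_character[OF assms(1,2)] by blast
  interpret unitary_character ch
    by fact
  have "\<not> isCont ch 0"
  proof
    assume "isCont ch 0"
    then have "continuous_on UNIV ch"
      by (simp add: continuous_at_imp_continuous_on isCont_if_isCont_zero)
    then have "continuous_on UNIV c"
      unfolding c_Re by (intro continuous_intros)
    with assms(3) show False ..
  qed
  then obtain t where "\<And>n. t n > 0" and "t \<longlonglongrightarrow> 0" and "(\<lambda>n. Re (ch (t n))) \<longlonglongrightarrow> \<alpha>"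
    using Re_approx_from_right assms(4,5) by blast
  moreover from this(3) have "(\<lambda>n. c (t n)) \<longlonglongrightarrow> complex_of_real \<alpha>"
    unfolding c_Re by (rule tendsto_of_real)
  ultimately show ?thesis
    by blast
qed

end
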